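(* Let $n\ge 1$ and $N\ge 1$ be integers, set $p=n(n-1)/2$, and let $X:=[\mathbb{C}^n]^N\times[\mathbb{C}^{p}]^N$. Write elements of $X$ as $\zeta=(\xi;\eta)$ with $\xi\in[\mathbb{C}^n]^N$ (deflection amplitudes) and $\eta\in[\mathbb{C}^p]^N$ (rotation amplitudes). Let $\mathbb{D}:\mathbb{R}^n\to \mathbb{C}^{X\times X}$ be a map with values in Hermitian matrices acting on $X$. For $\epsilon>0$ define the scaled matrices $\mathbb{D}_\epsilon(k)$, $k\in\mathbb{R}^n$, as the Hermitian matrices determined by $$\mathbb{D}_\epsilon(k)\,\zeta\cdot\zeta^*=\epsilon^{-2}\,\mathbb{D}(\epsilon k)\,(\xi;\epsilon\eta)\cdot(\xi^*;\epsilon\eta^* )\qquad\text{for all }\zeta=(\xi;\eta)\in X .$$ Let $L:\mathbb{C}^n\times\mathbb{C}^p\to X$ be the linear map $L(a;b)=\big(\tfrac1N a,\dots,\tfrac1N a;\ \tfrac1N b,\dots,\tfrac1N b\big)$ (each of the $N$ joint-class components receives $\tfrac1N a$ as deflection part and $\tfrac1N b$ as rotation part), and let $L^T$ denote its transpose. Assume that for every $k\in\mathbb{R}^n$ the matrix $\mathbb{D}_\epsilon(k)$ is invertible for all sufficiently small $\epsilon>0$, that the limit $M(k):=\lim_{\epsilon\to0}L^T\mathbb{D}_\epsilon^{-1}(k)L$ exists, and that $M(k)$ is invertible; define $\mathbb{D}_0(k):=M(k)^{-1}$. Then for every $\lambda>0$, every $k\in\mathbb{R}^n$ and every $\zeta_0=(\xi_0;\eta_0)\in\mathbb{C}^n\times\mathbb{C}^p$,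 $$\mathbb{D}_0(\lambda k)\,\zeta_0\cdot\zeta_0^*=\mathbb{D}_0(k)\,(\lambda\xi_0;\eta_0)\cdot(\lambda\xi_0^*;\eta_0^* ).$$
   Context: Notation: for a matrix $A$ and vectors $x,y$, $Ax\cdot y:=\sum_{j,i}A_{ji}x_i y_j$ (matrix product takes precedence over the dot product); $\zeta^*$ denotes the componentwise complex conjugate, so $A\zeta\cdot\zeta^*$ is the Hermitian quadratic form of $A$. $(x;y)$ denotes the concatenation (Cartesian product) of the arrays $x$ and $y$. In the paper's application, $\mathbb{D}(k)$ is the dynamical matrix (Fourier representation of the quadratic elastic energy) of a periodic beam lattice with $N$ joint classes, each joint carrying a deflection in $\mathbb{C}^n$ and a rotation in $\mathbb{C}^{n(n-1)/2}$, and $\mathbb{D}_0$ is the effective continuum dynamical matrix. *)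

theory Defs
  imports "HOL-Analysis.Analysis" "Jordan_Normal_Form.Schur_Decomposition"
begin

definition pdim :: "nat \<Rightarrow> nat" where
  "pdim n = n * (n - 1) div 2"

text \<open>Coordinates are ordered as
  xi (N blocks of n entries, class c occupying indices c*n..c*n+n-1), followed by
  eta (N blocks of p entries, class c occupying N*n + c*p .. N*n + c*p + p - 1).\<close>
definition xdim :: "nat \<Rightarrow> nat \<Rightarrow> nat" where
  "xdim n N = N * n + N * pdim n"

definition hermitian_mat :: "complex mat \<Rightarrow> bool" where
  "hermitian_mat A \<longleftrightarrow> square_mat A \<and> mat_adjoint A = A"

definition inv_mat :: "complex mat \<Rightarrow> complex mat" where
  "inv_mat A = (SOME B. inverts_mat A B \<and> inverts_mat B A)"

definition qform :: "complex mat \<Rightarrow> complex vec \<Rightarrow> complex" where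
  "qform A z = (\<Sum>i<dim_vec z. \<Sum>j<dim_vec z. A $$ (j, i) * z $ i * cnj (z $ j))"

definition scale_mat :: "nat \<Rightarrow> nat \<Rightarrow> real \<Rightarrow> complex mat" where
  "scale_mat n N \<epsilon> = mat (xdim n N) (xdim n N)
     (\<lambda>(i, j). if i = j then (if i < N * n then 1 else complex_of_real \<epsilon>) else 0)"

text \<open>The scaled matrix D_eps(k): the Hermitian matrix whose quadratic form is
  eps^-2 D(eps k)(xi; eps eta).(xi^*; eps eta^*), i.e. eps^-2 S D(eps k) S.\<close>
definition D_eps :: "(real vec \<Rightarrow> complex mat) \<Rightarrow> nat \<Rightarrow> nat \<Rightarrow> real \<Rightarrow> real vec \<Rightarrow> complex mat" where
  "D_eps D n N \<epsilon> k = complex_of_real (1 / \<epsilon>\<^sup>2) \<cdot>\<^sub>m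
     (scale_mat n N \<epsilon> * D (\<epsilon> \<cdot>\<^sub>v k) * scale_mat n N \<epsilon>)"

definition L_mat :: "nat \<Rightarrow> nat \<Rightarrow> complex mat" where
  "L_mat n N = mat (xdim n N) (n + pdim n)
     (\<lambda>(r, c). if r < N * n then (if c = r mod n then 1 / of_nat N else 0)
               else (if c = n + (r - N * n) mod pdim n then 1 / of_nat N else 0))"

end

theory Submission
  imports Defs
begin

(* The substitution \<epsilon> \<mapsto> \<lambda>\<epsilon> is a symmetry of the scaled problem. With
   U = diag(\<lambda> on deflections, 1 on rotations) one has D_\<epsilon>(\<lambda>k) = U D_(\<lambda>\<epsilon>)(k) U:
   both sides are built from D(\<lambda>\<epsilon>k), and the powers of \<lambda> produced by the prefactor
   (\<lambda>\<epsilon>)^-2 and by the rotation scaling \<lambda>\<epsilon> are exactly compensated by U.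
   Since L intertwines this scaling of X with V = diag(\<lambda>, 1) on C^n \<times> C^p, inverting gives
   L^T D_\<epsilon>(\<lambda>k)^-1 L = V^-1 (L^T D_(\<lambda>\<epsilon>)(k)^-1 L) V^-1, and letting \<epsilon> \<rightarrow> 0 yields
   M(\<lambda>k) = V^-1 M(k) V^-1, i.e. D_0(\<lambda>k) = V D_0(k) V, which is the claim. *)

definition split_scalar_mat :: "nat \<Rightarrow> nat \<Rightarrow> 'a \<Rightarrow> 'a \<Rightarrow> 'a :: zero mat" where
  "split_scalar_mat m d a b = mat m m (\<lambda>(i, j). if i = j then (if i < d then a else b) else 0)"

lemma split_scalar_mat_carrier [simp]: "split_scalar_mat m d a b \<in> carrier_mat m m"
  and dim_split_scalar_mat [simp]:
    "dim_row (split_scalar_mat m d a b) = m" "dim_col (split_scalar_mat m d a b) = m"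
  by (simp_all add: split_scalar_mat_def)

lemma transpose_split_scalar_mat [simp]:
  "transpose_mat (split_scalar_mat m d a b) = split_scalar_mat m d a b"
  by (auto simp: split_scalar_mat_def)

lemma index_split_scalar_mat_mult:
  fixes A :: "'a :: semiring_0 mat"
  assumes "A \<in> carrier_mat m k" "i < m" "j < k"
  shows "(split_scalar_mat m d a b * A) $$ (i, j) = (if i < d then a else b) * A $$ (i, j)"
proof -
  have "(split_scalar_mat m d a b * A) $$ (i, j)
      = (\<Sum>l = 0..<m. (if i = l then (if i < d then a else b) else 0) * A $$ (l, j))"
    using assms by (simp add: scalar_prod_def split_scalar_mat_def)
  also have "\<dots> = (\<Sum>l = 0..<m. if l = i then (if i < d then a else b) * A $$ (i, j) else 0)"
    by (rule sum.cong) auto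
  finally show ?thesis
    using assms(2) by simp
qed

lemma index_mult_split_scalar_mat:
  fixes A :: "'a :: semiring_0 mat"
  assumes "A \<in> carrier_mat k m" "i < k" "j < m"
  shows "(A * split_scalar_mat m d a b) $$ (i, j) = A $$ (i, j) * (if j < d then a else b)"
proof -
  have "(A * split_scalar_mat m d a b) $$ (i, j)
      = (\<Sum>l = 0..<m. A $$ (i, l) * (if l = j then (if l < d then a else b) else 0))"
    using assms by (simp add: scalar_prod_def split_scalar_mat_def)
  also have "\<dots> = (\<Sum>l = 0..<m. if l = j then A $$ (i, j) * (if j < d then a else b) else 0)"
    by (rule sum.cong) auto
  finally show ?thesis
    using assms(3) by simp
qed

lemma index_split_scalar_mat_sandwich:
  fixes A :: "'a :: semiring_0 mat"
  assumes "A \<in> carrier_mat m m" "i < m" "j < m"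
  shows "(split_scalar_mat m d a b * A * split_scalar_mat m d a' b') $$ (i, j)
       = (if i < d then a else b) * A $$ (i, j) * (if j < d then a' else b')"
proof -
  have "split_scalar_mat m d a b * A \<in> carrier_mat m m"
    using mult_carrier_mat[OF split_scalar_mat_carrier assms(1)] .
  then show ?thesis
    by (simp only: index_mult_split_scalar_mat assms index_split_scalar_mat_mult[OF assms])
qed

lemma split_scalar_mat_mult:
  fixes a b a' b' :: "'a :: semiring_0"
  shows "split_scalar_mat m d a b * split_scalar_mat m d a' b' = split_scalar_mat m d (a * a') (b * b')"
proof (rule eq_matI)
  fix i j
  assume "i < dim_row (split_scalar_mat m d (a * a') (b * b'))"
    and "j < dim_col (split_scalar_mat m d (a * a') (b * b'))"
  then show "(split_scalar_mat m d a b * split_scalar_mat m d a' b') $$ (i, j)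
      = split_scalar_mat m d (a * a') (b * b') $$ (i, j)"
    by (subst index_mult_split_scalar_mat[OF split_scalar_mat_carrier])
      (auto simp: split_scalar_mat_def)
qed auto

lemma split_scalar_mat_one: "split_scalar_mat m d 1 1 = (1\<^sub>m m :: 'a :: zero_neq_one mat)"
  by (auto simp: split_scalar_mat_def)

lemma qform_split_scalar_mat_sandwich:
  fixes A :: "complex mat" and a b :: real
  assumes A: "A \<in> carrier_mat m m" and z: "dim_vec z = m"
  shows "qform (split_scalar_mat m d (of_real a) (of_real b) * A
                  * split_scalar_mat m d (of_real a) (of_real b)) z
       = qform A (vec m (\<lambda>i. (if i < d then of_real a else of_real b) * z $ i))"
proof -
  have "(split_scalar_mat m d (of_real a) (of_real b) * A
          * split_scalar_mat m d (of_real a) (of_real b)) $$ (j, i) * z $ i * cnj (z $ j)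
      = A $$ (j, i) * ((if i < d then of_real a else of_real b) * z $ i)
        * cnj ((if j < d then of_real a else of_real b) * z $ j)" if "i < m" "j < m" for i j
    unfolding index_split_scalar_mat_sandwich[OF A that(2,1)] by simp
  then show ?thesis
    unfolding qform_def dim_vec z by (intro sum.cong refl) (simp add: z)
qed

lemma inv_mat_inverse:
  assumes "A \<in> carrier_mat m m" "invertible_mat A"
  shows inv_mat_carrier: "inv_mat A \<in> carrier_mat m m"
    and mult_inv_mat: "A * inv_mat A = 1\<^sub>m m"
proof -
  have "inverts_mat A (inv_mat A) \<and> inverts_mat (inv_mat A) A"
    unfolding inv_mat_def by (rule someI_ex) (use assms(2) in \<open>auto simp: invertible_mat_def\<close>)
  then have AB: "A * inv_mat A = 1\<^sub>m m" and BA: "inv_mat A * A = 1\<^sub>m (dim_row (inv_mat A))"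
    using assms(1) unfolding inverts_mat_def by auto
  have "dim_col (inv_mat A) = m"
    using arg_cong[OF AB, of dim_col] by simp
  moreover have "dim_row (inv_mat A) = m"
    using arg_cong[OF BA, of dim_col] assms(1) by simp
  ultimately show "inv_mat A \<in> carrier_mat m m"
    by auto
  show "A * inv_mat A = 1\<^sub>m m"
    using AB .
qed

lemma inv_mat_eqI:
  assumes A: "A \<in> carrier_mat m m" and B: "B \<in> carrier_mat m m" and AB: "A * B = 1\<^sub>m m"
  shows "inv_mat A = B"
proof -
  have BA: "B * A = 1\<^sub>m m"
    using mat_mult_left_right_inverse[OF A B AB] .
  then have "invertible_mat A"
    using A B AB unfolding invertible_mat_def inverts_mat_def by auto
  then have C: "inv_mat A \<in> carrier_mat m m" and AC: "A * inv_mat A = 1\<^sub>m m"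
    using inv_mat_inverse[OF A] by auto
  have "inv_mat A = (B * A) * inv_mat A"
    using BA C by simp
  also have "\<dots> = B * (A * inv_mat A)"
    using A B C by simp
  also have "\<dots> = B"
    using AC B by simp
  finally show ?thesis .
qed

lemma inv_mat_sandwich:
  assumes A: "A \<in> carrier_mat m m" "invertible_mat A"
    and U: "U \<in> carrier_mat m m" and V: "V \<in> carrier_mat m m" and UV: "U * V = 1\<^sub>m m"
  shows "inv_mat (U * A * U) = V * inv_mat A * V"
proof (rule inv_mat_eqI)
  have C: "inv_mat A \<in> carrier_mat m m" and AC: "A * inv_mat A = 1\<^sub>m m"
    using inv_mat_inverse[OF A] by auto
  show "U * A * U \<in> carrier_mat m m" "V * inv_mat A * V \<in> carrier_mat m m"
    using A U V C by auto
  have "U * A * U * (V * inv_mat A * V) = U * (A * (U * V) * inv_mat A) * V"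
    using A U V C by (simp add: assoc_mult_mat[of _ m m _ m _ m])
  also have "\<dots> = 1\<^sub>m m"
    using A U V C UV AC by (simp add: assoc_mult_mat[of _ m m _ m _ m])
  finally show "U * A * U * (V * inv_mat A * V) = 1\<^sub>m m" .
qed

lemma scale_mat_eq_split_scalar_mat:
  "scale_mat n N \<epsilon> = split_scalar_mat (xdim n N) (N * n) 1 (complex_of_real \<epsilon>)"
  by (simp add: scale_mat_def split_scalar_mat_def)

lemma D_eps_carrier:
  assumes "D (\<epsilon> \<cdot>\<^sub>v q) \<in> carrier_mat (xdim n N) (xdim n N)"
  shows "D_eps D n N \<epsilon> q \<in> carrier_mat (xdim n N) (xdim n N)"
  unfolding D_eps_def scale_mat_eq_split_scalar_mat
  by (rule smult_carrier_mat,
      rule mult_carrier_mat[OF mult_carrier_mat[OF split_scalar_mat_carrier assms] split_scalar_mat_carrier])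

lemma index_D_eps:
  assumes "D (\<epsilon> \<cdot>\<^sub>v q) \<in> carrier_mat (xdim n N) (xdim n N)" "i < xdim n N" "j < xdim n N"
  shows "D_eps D n N \<epsilon> q $$ (i, j) = complex_of_real (1 / \<epsilon>\<^sup>2) *
    ((if i < N * n then 1 else complex_of_real \<epsilon>) * D (\<epsilon> \<cdot>\<^sub>v q) $$ (i, j)
     * (if j < N * n then 1 else complex_of_real \<epsilon>))"
  using assms(2,3) unfolding D_eps_def scale_mat_eq_split_scalar_mat
  by (simp del: index_mult_mat(1) add: index_split_scalar_mat_sandwich[OF assms])

lemma D_eps_rescale:
  fixes n N :: nat and lam \<epsilon> :: real
  defines "U \<equiv> split_scalar_mat (xdim n N) (N * n) (complex_of_real lam) 1"
  assumes "lam > 0" "\<epsilon> > 0" and D: "D ((lam * \<epsilon>) \<cdot>\<^sub>v k) \<in> carrier_mat (xdim n N) (xdim n N)"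
  shows "D_eps D n N \<epsilon> (lam \<cdot>\<^sub>v k) = U * D_eps D n N (lam * \<epsilon>) k * U"
proof (rule eq_matI)
  have D': "D (\<epsilon> \<cdot>\<^sub>v (lam \<cdot>\<^sub>v k)) \<in> carrier_mat (xdim n N) (xdim n N)"
    using D by (simp add: smult_smult_assoc mult.commute)
  have B: "D_eps D n N (lam * \<epsilon>) k \<in> carrier_mat (xdim n N) (xdim n N)"
    using D_eps_carrier[of D "lam * \<epsilon>" k, OF D] .
  show "dim_row (D_eps D n N \<epsilon> (lam \<cdot>\<^sub>v k)) = dim_row (U * D_eps D n N (lam * \<epsilon>) k * U)"
    "dim_col (D_eps D n N \<epsilon> (lam \<cdot>\<^sub>v k)) = dim_col (U * D_eps D n N (lam * \<epsilon>) k * U)"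
    using D_eps_carrier[of D \<epsilon> "lam \<cdot>\<^sub>v k", OF D'] B by (simp_all add: U_def)
  fix i j assume "i < dim_row (U * D_eps D n N (lam * \<epsilon>) k * U)"
    and "j < dim_col (U * D_eps D n N (lam * \<epsilon>) k * U)"
  then have ij: "i < xdim n N" "j < xdim n N"
    by (simp_all add: U_def)
  show "D_eps D n N \<epsilon> (lam \<cdot>\<^sub>v k) $$ (i, j) = (U * D_eps D n N (lam * \<epsilon>) k * U) $$ (i, j)"
    unfolding U_def index_split_scalar_mat_sandwich[OF B ij]
      index_D_eps[of D "lam * \<epsilon>" k, OF D ij] index_D_eps[of D \<epsilon> "lam \<cdot>\<^sub>v k", OF D' ij]
    using \<open>lam > 0\<close> \<open>\<epsilon> > 0\<close>
    by (simp add: smult_smult_assoc mult.commute power2_eq_square field_simps)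
qed

lemma L_mat_carrier: "L_mat n N \<in> carrier_mat (xdim n N) (n + pdim n)"
  by (simp add: L_mat_def)

lemma split_scalar_mat_mult_L_mat:
  "split_scalar_mat (xdim n N) (N * n) a b * L_mat n N = L_mat n N * split_scalar_mat (n + pdim n) n a b"
proof (rule eq_matI)
  fix r c assume "r < dim_row (L_mat n N * split_scalar_mat (n + pdim n) n a b)"
    and "c < dim_col (L_mat n N * split_scalar_mat (n + pdim n) n a b)"
  then have rc: "r < xdim n N" "c < n + pdim n"
    by (simp_all add: L_mat_def)
  have "r < N * n \<longleftrightarrow> c < n" if "L_mat n N $$ (r, c) \<noteq> 0"
  proof (cases "r < N * n")
    case True
    then have "n > 0" by (cases n) auto
    with True that rc show ?thesis by (auto simp: L_mat_def split: if_splits)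
  qed (use that rc in \<open>auto simp: L_mat_def\<close>)
  then show "(split_scalar_mat (xdim n N) (N * n) a b * L_mat n N) $$ (r, c)
      = (L_mat n N * split_scalar_mat (n + pdim n) n a b) $$ (r, c)"
    unfolding index_split_scalar_mat_mult[OF L_mat_carrier rc]
      index_mult_split_scalar_mat[OF L_mat_carrier rc]
    by (cases "L_mat n N $$ (r, c) = 0") auto
qed (simp_all add: L_mat_def)

lemma transpose_L_mat_mult_split_scalar_mat:
  "transpose_mat (L_mat n N) * split_scalar_mat (xdim n N) (N * n) a b
     = split_scalar_mat (n + pdim n) n a b * transpose_mat (L_mat n N)"
  using arg_cong[OF split_scalar_mat_mult_L_mat, of transpose_mat]
  by (simp add: transpose_mult[OF split_scalar_mat_carrier L_mat_carrier]
      transpose_mult[OF L_mat_carrier split_scalar_mat_carrier])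

lemma transpose_L_mat_sandwich:
  fixes n N :: nat and a b :: complex
  assumes B: "B \<in> carrier_mat (xdim n N) (xdim n N)"
  defines "S \<equiv> split_scalar_mat (xdim n N) (N * n) a b"
    and "S' \<equiv> split_scalar_mat (n + pdim n) n a b"
  shows "transpose_mat (L_mat n N) * (S * B * S) * L_mat n N
       = S' * (transpose_mat (L_mat n N) * B * L_mat n N) * S'"
proof -
  define X where "X = xdim n N"
  define P where "P = n + pdim n"
  have carriers: "transpose_mat (L_mat n N) \<in> carrier_mat P X" "L_mat n N \<in> carrier_mat X P"
    "S \<in> carrier_mat X X" "S' \<in> carrier_mat P P" "B \<in> carrier_mat X X"
    using B by (simp_all add: L_mat_carrier S_def S'_def X_def P_def)
  note assoc = assoc_mult_mat[of _ X X _ X _ X] assoc_mult_mat[of _ X X _ X _ P]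
    assoc_mult_mat[of _ P X _ X _ X] assoc_mult_mat[of _ P X _ X _ P]
    assoc_mult_mat[of _ P P _ X _ X] assoc_mult_mat[of _ P P _ X _ P]
    assoc_mult_mat[of _ P X _ P _ P] assoc_mult_mat[of _ P P _ P _ P]
  have "transpose_mat (L_mat n N) * (S * B * S) * L_mat n N
      = (transpose_mat (L_mat n N) * S) * B * (S * L_mat n N)"
    using carriers by (simp add: assoc)
  also have "\<dots> = (S' * transpose_mat (L_mat n N)) * B * (L_mat n N * S')"
    unfolding S_def S'_def split_scalar_mat_mult_L_mat transpose_L_mat_mult_split_scalar_mat ..
  also have "\<dots> = S' * (transpose_mat (L_mat n N) * B * L_mat n N) * S'"
    using carriers by (simp add: assoc)
  finally show ?thesis .
qed

lemma transpose_L_inv_D_eps_rescale: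
  fixes n N :: nat and lam \<epsilon> :: real
  defines "V \<equiv> split_scalar_mat (n + pdim n) n (complex_of_real (1 / lam)) 1"
  assumes lam: "lam > 0" and "\<epsilon> > 0"
    and D: "D ((lam * \<epsilon>) \<cdot>\<^sub>v k) \<in> carrier_mat (xdim n N) (xdim n N)"
    and inv: "invertible_mat (D_eps D n N (lam * \<epsilon>) k)"
  shows "transpose_mat (L_mat n N) * inv_mat (D_eps D n N \<epsilon> (lam \<cdot>\<^sub>v k)) * L_mat n N
       = V * (transpose_mat (L_mat n N) * inv_mat (D_eps D n N (lam * \<epsilon>) k) * L_mat n N) * V"
proof -
  define U where "U = split_scalar_mat (xdim n N) (N * n) (complex_of_real lam) 1"
  define U' where "U' = split_scalar_mat (xdim n N) (N * n) (complex_of_real (1 / lam)) 1"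
  have B: "D_eps D n N (lam * \<epsilon>) k \<in> carrier_mat (xdim n N) (xdim n N)"
    using D_eps_carrier[of D "lam * \<epsilon>" k, OF D] .
  have "U * U' = 1\<^sub>m (xdim n N)"
    using lam by (simp add: U_def U'_def split_scalar_mat_mult split_scalar_mat_one)
  then have "inv_mat (D_eps D n N \<epsilon> (lam \<cdot>\<^sub>v k)) = U' * inv_mat (D_eps D n N (lam * \<epsilon>) k) * U'"
    unfolding D_eps_rescale[where D = D and k = k, OF assms(2-4)] U_def[symmetric]
    using inv_mat_sandwich[OF B inv] by (simp add: U_def U'_def)
  then show ?thesis
    unfolding U'_def V_def using transpose_L_mat_sandwich[OF inv_mat_carrier[OF B inv]] by simp
qed

lemma filterlim_mult_left_at_right_0:
  fixes c :: real
  assumes "c > 0"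
  shows "filterlim (\<lambda>\<epsilon>. c * \<epsilon>) (at_right 0) (at_right 0)"
proof -
  have "((\<lambda>\<epsilon>. c * \<epsilon>) \<longlongrightarrow> 0) (at_right 0)"
    by (intro tendsto_mult_right_zero tendsto_ident_at)
  moreover have "eventually (\<lambda>\<epsilon>. c * \<epsilon> \<in> {0<..} \<and> c * \<epsilon> \<noteq> 0) (at_right 0)"
    using eventually_at_right_less[of 0] assms by (auto elim!: eventually_mono)
  ultimately show ?thesis
    by (simp add: filterlim_at)
qed

lemma effective_mat_rescale:
  fixes n N :: nat and D :: "real vec \<Rightarrow> complex mat" and lam :: real and A A' :: "complex mat"
  defines "G \<equiv> \<lambda>\<epsilon> q. transpose_mat (L_mat n N) * inv_mat (D_eps D n N \<epsilon> q) * L_mat n N"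
    and "V \<equiv> split_scalar_mat (n + pdim n) n (complex_of_real (1 / lam)) 1"
  assumes lam: "lam > 0"
    and D: "\<And>\<epsilon>. D (\<epsilon> \<cdot>\<^sub>v k) \<in> carrier_mat (xdim n N) (xdim n N)"
    and inv: "eventually (\<lambda>\<epsilon>. invertible_mat (D_eps D n N \<epsilon> k)) (at_right 0)"
    and lim: "\<And>i j. i < n + pdim n \<Longrightarrow> j < n + pdim n \<Longrightarrow>
      ((\<lambda>\<epsilon>. G \<epsilon> k $$ (i, j)) \<longlongrightarrow> A $$ (i, j)) (at_right 0)"
    and lim': "\<And>i j. i < n + pdim n \<Longrightarrow> j < n + pdim n \<Longrightarrow>
      ((\<lambda>\<epsilon>. G \<epsilon> (lam \<cdot>\<^sub>v k) $$ (i, j)) \<longlongrightarrow> A' $$ (i, j)) (at_right 0)"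
    and A: "A \<in> carrier_mat (n + pdim n) (n + pdim n)"
    and A': "A' \<in> carrier_mat (n + pdim n) (n + pdim n)"
  shows "A' = V * A * V"
proof (rule eq_matI)
  fix i j assume "i < dim_row (V * A * V)" "j < dim_col (V * A * V)"
  then have ij: "i < n + pdim n" "j < n + pdim n"
    by (simp_all add: V_def)
  define v where "v l = (if l < n then complex_of_real (1 / lam) else 1)" for l
  have scale: "filterlim (\<lambda>\<epsilon>. lam * \<epsilon>) (at_right 0) (at_right 0)"
    using filterlim_mult_left_at_right_0[OF lam] .
  have "eventually (\<lambda>\<epsilon>. invertible_mat (D_eps D n N (lam * \<epsilon>) k)) (at_right 0)"
    using inv scale unfolding filterlim_iff by blast
  with eventually_at_right_less[of 0]
  have "eventually (\<lambda>\<epsilon>. G \<epsilon> (lam \<cdot>\<^sub>v k) $$ (i, j) = v i * G (lam * \<epsilon>) k $$ (i, j) * v j) (at_right 0)"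
  proof eventually_elim
    case (elim \<epsilon>)
    have C: "transpose_mat (L_mat n N) * inv_mat (D_eps D n N (lam * \<epsilon>) k) * L_mat n N
        \<in> carrier_mat (n + pdim n) (n + pdim n)"
      using inv_mat_carrier[OF D_eps_carrier[of D "lam * \<epsilon>" k, OF D] elim(2)]
      by (intro mult_carrier_mat[OF mult_carrier_mat L_mat_carrier]) (simp_all add: L_mat_carrier)
    show ?case
      unfolding G_def transpose_L_inv_D_eps_rescale[where D = D and k = k, OF lam elim(1) D elim(2)]
        index_split_scalar_mat_sandwich[OF C ij] v_def
      by simp
  qed
  moreover have "((\<lambda>\<epsilon>. v i * G (lam * \<epsilon>) k $$ (i, j) * v j) \<longlongrightarrow> v i * A $$ (i, j) * v j) (at_right 0)"
    by (intro tendsto_mult_right tendsto_mult_left filterlim_compose[OF lim[OF ij] scale])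
  ultimately have "((\<lambda>\<epsilon>. G \<epsilon> (lam \<cdot>\<^sub>v k) $$ (i, j)) \<longlongrightarrow> v i * A $$ (i, j) * v j) (at_right 0)"
    by (rule iffD2[OF tendsto_cong])
  then have "A' $$ (i, j) = v i * A $$ (i, j) * v j"
    using tendsto_unique[OF _ lim'[OF ij]] by simp
  then show "A' $$ (i, j) = (V * A * V) $$ (i, j)"
    unfolding V_def index_split_scalar_mat_sandwich[OF A ij] v_def .
qed (use A A' in \<open>simp_all add: V_def\<close>)

theorem mainTheorem1:
  fixes n N :: nat
    and D :: "real vec \<Rightarrow> complex mat"
    and M :: "real vec \<Rightarrow> complex mat"
    and lam :: real and k :: "real vec" and \<zeta>0 :: "complex vec"
  assumes n_pos: "n \<ge> 1" and N_pos: "N \<ge> 1"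
    and D_carrier: "\<And>q. dim_vec q = n \<Longrightarrow> D q \<in> carrier_mat (xdim n N) (xdim n N)"
    and D_herm: "\<And>q. dim_vec q = n \<Longrightarrow> hermitian_mat (D q)"
    and D_eps_inv: "\<And>q. dim_vec q = n \<Longrightarrow>
           eventually (\<lambda>\<epsilon>. invertible_mat (D_eps D n N \<epsilon> q)) (at_right 0)"
    and M_carrier: "\<And>q. dim_vec q = n \<Longrightarrow> M q \<in> carrier_mat (n + pdim n) (n + pdim n)"
    and M_lim: "\<And>q i j. dim_vec q = n \<Longrightarrow> i < n + pdim n \<Longrightarrow> j < n + pdim n \<Longrightarrow>
           ((\<lambda>\<epsilon>. (transpose_mat (L_mat n N) * inv_mat (D_eps D n N \<epsilon> q) * L_mat n N) $$ (i, j))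
              \<longlongrightarrow> M q $$ (i, j)) (at_right 0)"
    and M_inv: "\<And>q. dim_vec q = n \<Longrightarrow> invertible_mat (M q)"
    and lam_pos: "lam > 0" and k_dim: "dim_vec k = n" and z_dim: "dim_vec \<zeta>0 = n + pdim n"
  shows "qform (inv_mat (M (lam \<cdot>\<^sub>v k))) \<zeta>0 =
         qform (inv_mat (M k))
           (vec (n + pdim n) (\<lambda>i. if i < n then complex_of_real lam * \<zeta>0 $ i else \<zeta>0 $ i))"
proof -
  define V where "V = split_scalar_mat (n + pdim n) n (complex_of_real lam) 1"
  define V' where "V' = split_scalar_mat (n + pdim n) n (complex_of_real (1 / lam)) 1"
  have lam_k_dim: "dim_vec (lam \<cdot>\<^sub>v k) = n"
    using k_dim by simp
  have "M (lam \<cdot>\<^sub>v k) = V' * M k * V'"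
    unfolding V'_def
    by (rule effective_mat_rescale[OF lam_pos D_carrier D_eps_inv M_lim M_lim M_carrier M_carrier])
      (simp_all add: k_dim lam_k_dim)
  moreover have "V' * V = 1\<^sub>m (n + pdim n)"
    using lam_pos by (simp add: V_def V'_def split_scalar_mat_mult split_scalar_mat_one)
  ultimately have "inv_mat (M (lam \<cdot>\<^sub>v k)) = V * inv_mat (M k) * V"
    using inv_mat_sandwich[OF M_carrier[OF k_dim] M_inv[OF k_dim]] by (simp add: V_def V'_def)
  then show ?thesis
    using qform_split_scalar_mat_sandwich[OF inv_mat_carrier[OF M_carrier[OF k_dim] M_inv[OF k_dim]] z_dim,
        of n lam 1]
    by (simp add: V_def if_distrib[of "\<lambda>c. c * _"] cong: if_cong)
qed

end
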